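(* Let $K$ be a positive definite kernel on $\Omega\subset\mathbb{R}^d$, $X_n=\{x_1,\dots,x_n\}\subset\Omega$ pairwise distinct, $\lambda>0$ and $0\le\mu\le\lambda$, where in case $\mu=0$ the kernel $K$ is assumed strictly positive definite. Then for all $x\in\Omega$ $$Q_n^\lambda(x)^2\le P_n^\mu(x)^2+\lambda\left(1+\Lambda_{n,2}^\mu(x)^2\right),$$ and equality holds if $\mu=\lambda$ and $x\notin X_n$.
   Context: A kernel is positive definite if symmetric with positive semidefinite kernel matrices on pairwise distinct points (strictly: positive definite). $\mathcal{H}$ is the native space (RKHS) of $K$; $\delta(x,y)=1$ if $x=y$, else $0$; $K_\lambda:=K+\lambda\delta$ with native space $\mathcal{H}_\lambda$. Let $A=(K(x_i,x_j))_{i,j=1}^n$. For $f:\Omega\to\mathbb{R}$: $s_n^\mu(f):=\sum_j\alpha_jK(\cdot,x_j)$ with $(A+\mu I)\alpha=(f(x_i))_i$, and $I_n^\lambda(f):=\sum_j\alpha_jK_\lambda(\cdot,x_j)$ with $(A+\lambda I)\alpha=(f(x_i))_i$. $P_n^\mu(x):=\sup_{f\in\mathcal{H},f\ne0}|f(x)-s_n^\mu(f)(x)|/\|f\|_{\mathcal{H}}$ and $Q_n^\lambda(x):=\sup_{f\in\mathcal{H}_\lambda,f\ne0}|f(x)-I_n^\lambda(f)(x)|/\|f\|_{\mathcal{H}_\lambda}$. The Lagrange functions are $\ell_j^\mu:=\sum_{i=1}^n((A+\mu I)^{-1})_{ij}K(\cdot,x_i)$ and the $\ell_2$-Lebesgue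 function is $\Lambda_{n,2}^\mu(x):=\big(\sum_{j=1}^n\ell_j^\mu(x)^2\big)^{1/2}$. *)

theory Defs
  imports "HOL-Analysis.Analysis"
begin

definition pd_kernel :: "'a set \<Rightarrow> ('a \<Rightarrow> 'a \<Rightarrow> real) \<Rightarrow> bool" where
  "pd_kernel \<Omega> K \<longleftrightarrow>
     (\<forall>a\<in>\<Omega>. \<forall>b\<in>\<Omega>. K a b = K b a) \<and>
     (\<forall>S c. finite S \<longrightarrow> S \<subseteq> \<Omega> \<longrightarrow>
        0 \<le> (\<Sum>p\<in>S. \<Sum>q\<in>S. c p * c q * K p q))"

definition strictly_pd_kernel :: "'a set \<Rightarrow> ('a \<Rightarrow> 'a \<Rightarrow> real) \<Rightarrow> bool" where
  "strictly_pd_kernel \<Omega> K \<longleftrightarrow>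
     (\<forall>a\<in>\<Omega>. \<forall>b\<in>\<Omega>. K a b = K b a) \<and>
     (\<forall>S c. finite S \<longrightarrow> S \<subseteq> \<Omega> \<longrightarrow> (\<exists>p\<in>S. c p \<noteq> 0) \<longrightarrow>
        0 < (\<Sum>p\<in>S. \<Sum>q\<in>S. c p * c q * K p q))"

definition delta_kernel :: "'a \<Rightarrow> 'a \<Rightarrow> real" where
  "delta_kernel a b = (if a = b then 1 else 0)"

definition reg_kernel :: "('a \<Rightarrow> 'a \<Rightarrow> real) \<Rightarrow> real \<Rightarrow> 'a \<Rightarrow> 'a \<Rightarrow> real" where
  "reg_kernel K lam a b = K a b + lam * delta_kernel a b"

text \<open>Native space (RKHS) of a positive definite kernel, via Aronszajn's characterization:
  f belongs to the native space iff the functional (sum of c_p K(.,p)) |-> sum of c_p f(p) is bounded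
  on span of K(.,p), p in \<Omega>; the native norm is the norm of that functional.\<close>

definition native_vals :: "'a set \<Rightarrow> ('a \<Rightarrow> 'a \<Rightarrow> real) \<Rightarrow> ('a \<Rightarrow> real) \<Rightarrow> real set" where
  "native_vals \<Omega> K f = {\<bar>\<Sum>p\<in>S. c p * f p\<bar> | S c. finite S \<and> S \<subseteq> \<Omega> \<and>
       (\<Sum>p\<in>S. \<Sum>q\<in>S. c p * c q * K p q) \<le> 1}"

definition in_native :: "'a set \<Rightarrow> ('a \<Rightarrow> 'a \<Rightarrow> real) \<Rightarrow> ('a \<Rightarrow> real) \<Rightarrow> bool" where
  "in_native \<Omega> K f \<longleftrightarrow> bdd_above (native_vals \<Omega> K f)"

definition native_norm :: "'a set \<Rightarrow> ('a \<Rightarrow> 'a \<Rightarrow> real) \<Rightarrow> ('a \<Rightarrow> real) \<Rightarrow> real" where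
  "native_norm \<Omega> K f = Sup (native_vals \<Omega> K f)"

text \<open>Kernel matrix A for points x indexed by the finite type 'n (n = CARD('n)).\<close>

definition kmat :: "('a \<Rightarrow> 'a \<Rightarrow> real) \<Rightarrow> ('n::finite \<Rightarrow> 'a) \<Rightarrow> real^'n^'n" where
  "kmat K x = (\<chi> i j. K (x i) (x j))"

definition coeffs :: "('a \<Rightarrow> 'a \<Rightarrow> real) \<Rightarrow> ('n::finite \<Rightarrow> 'a) \<Rightarrow> real \<Rightarrow> ('a \<Rightarrow> real) \<Rightarrow> real^'n" where
  "coeffs K x mu f = matrix_inv (kmat K x + mu *\<^sub>R mat 1) *v (\<chi> i. f (x i))"

definition s_approx :: "('a \<Rightarrow> 'a \<Rightarrow> real) \<Rightarrow> ('n::finite \<Rightarrow> 'a) \<Rightarrow> real \<Rightarrow> ('a \<Rightarrow> real) \<Rightarrow> 'a \<Rightarrow> real" where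
  "s_approx K x mu f y = (\<Sum>j\<in>UNIV. coeffs K x mu f $ j * K y (x j))"

definition I_interp :: "('a \<Rightarrow> 'a \<Rightarrow> real) \<Rightarrow> ('n::finite \<Rightarrow> 'a) \<Rightarrow> real \<Rightarrow> ('a \<Rightarrow> real) \<Rightarrow> 'a \<Rightarrow> real" where
  "I_interp K x lam f y = (\<Sum>j\<in>UNIV. coeffs K x lam f $ j * reg_kernel K lam y (x j))"

text \<open>Power functions. "f \<noteq> 0" means f is not identically zero on \<Omega>.
  The supremum is taken together with 0 (all quotients are nonnegative), so that the
  supremum over an empty family is 0.\<close>

definition power_P :: "'a set \<Rightarrow> ('a \<Rightarrow> 'a \<Rightarrow> real) \<Rightarrow> ('n::finite \<Rightarrow> 'a) \<Rightarrow> real \<Rightarrow> 'a \<Rightarrow> real" where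
  "power_P \<Omega> K x mu y = Sup (insert 0
     {\<bar>f y - s_approx K x mu f y\<bar> / native_norm \<Omega> K f | f.
        in_native \<Omega> K f \<and> (\<exists>z\<in>\<Omega>. f z \<noteq> 0)})"

definition power_Q :: "'a set \<Rightarrow> ('a \<Rightarrow> 'a \<Rightarrow> real) \<Rightarrow> ('n::finite \<Rightarrow> 'a) \<Rightarrow> real \<Rightarrow> 'a \<Rightarrow> real" where
  "power_Q \<Omega> K x lam y = Sup (insert 0
     {\<bar>f y - I_interp K x lam f y\<bar> / native_norm \<Omega> (reg_kernel K lam) f | f.
        in_native \<Omega> (reg_kernel K lam) f \<and> (\<exists>z\<in>\<Omega>. f z \<noteq> 0)})"

definition lagrange :: "('a \<Rightarrow> 'a \<Rightarrow> real) \<Rightarrow> ('n::finite \<Rightarrow> 'a) \<Rightarrow> real \<Rightarrow> 'n \<Rightarrow> 'a \<Rightarrow> real" where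
  "lagrange K x mu j y =
     (\<Sum>i\<in>UNIV. matrix_inv (kmat K x + mu *\<^sub>R mat 1) $ i $ j * K y (x i))"

definition lebesgue2 :: "('a \<Rightarrow> 'a \<Rightarrow> real) \<Rightarrow> ('n::finite \<Rightarrow> 'a) \<Rightarrow> real \<Rightarrow> 'a \<Rightarrow> real" where
  "lebesgue2 K x mu y = sqrt (\<Sum>j\<in>UNIV. (lagrange K x mu j y)\<^sup>2)"

end

theory Submission
  imports Defs
begin

text \<open>Both power functions are norms of point-evaluation functionals on native spaces: for
  weights \<open>w\<^sub>k\<close> at nodes \<open>z\<^sub>k\<close>, the supremum of \<open>\<bar>\<Sum> w\<^sub>k f(z\<^sub>k)\<bar> / \<parallel>f\<parallel>\<close> over the native space
  of a kernel \<open>L\<close> is \<open>sqrt (\<Sum>\<Sum> w\<^sub>k w\<^sub>l L(z\<^sub>k, z\<^sub>l))\<close>, attained by the representer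
  \<open>\<Sum> w\<^sub>l L(\<cdot>, z\<^sub>l)\<close>. Since \<open>I\<^sub>n\<^sup>\<lambda>\<close> interpolates in the native space of \<open>K\<^sub>\<lambda>\<close>, its weights minimise
  this quadratic form among all recovery weights, so \<open>Q\<^sup>2\<close> is at most the \<open>K\<^sub>\<lambda>\<close>-form of the
  weights \<open>(1, -\<ell>\<^sup>\<mu>(x))\<close> at the nodes \<open>(x, x\<^sub>1, \<dots>, x\<^sub>n)\<close>. For \<open>x \<notin> X\<^sub>n\<close> these nodes are distinct
  and the \<open>K\<^sub>\<lambda>\<close>-form splits into the \<open>K\<close>-form, which is \<open>P\<^sup>2\<close>, plus \<open>\<lambda>(1 + \<Lambda>\<^sup>2)\<close>; for \<open>\<mu> = \<lambda>\<close>
  the two weight vectors coincide. For \<open>x \<in> X\<^sub>n\<close> the power function \<open>Q\<close> vanishes.\<close>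

definition kernel_form ::
    "('a \<Rightarrow> 'a \<Rightarrow> real) \<Rightarrow> 'i set \<Rightarrow> ('i \<Rightarrow> 'a) \<Rightarrow> ('i \<Rightarrow> real) \<Rightarrow> ('i \<Rightarrow> real) \<Rightarrow> real" where
  "kernel_form L I z a b = (\<Sum>k\<in>I. \<Sum>l\<in>I. a k * b l * L (z k) (z l))"

definition push_weights :: "('i \<Rightarrow> 'a) \<Rightarrow> 'i set \<Rightarrow> ('i \<Rightarrow> real) \<Rightarrow> 'a \<Rightarrow> real" where
  "push_weights z I w p = (\<Sum>k\<in>{k\<in>I. z k = p}. w k)"

lemma sum_push_weights:
  assumes "finite I" "finite T" "z ` I \<subseteq> T"
  shows "(\<Sum>p\<in>T. push_weights z I w p * h p) = (\<Sum>k\<in>I. w k * h (z k))"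
proof -
  have "(\<Sum>p\<in>T. push_weights z I w p * h p) = (\<Sum>p\<in>T. \<Sum>k\<in>{k\<in>I. z k = p}. w k * h (z k))"
    unfolding push_weights_def by (auto simp: sum_distrib_right intro!: sum.cong)
  also have "\<dots> = (\<Sum>k\<in>I. w k * h (z k))"
    using sum.group[of I T z "\<lambda>k. w k * h (z k)"] assms by auto
  finally show ?thesis .
qed

lemma kernel_form_push_weights:
  assumes "finite I" "finite T" "z ` I \<subseteq> T"
  shows "kernel_form L T id (push_weights z I a) (push_weights z I b) = kernel_form L I z a b"
proof -
  have "kernel_form L T id (push_weights z I a) (push_weights z I b)
      = (\<Sum>p\<in>T. push_weights z I a p * (\<Sum>q\<in>T. push_weights z I b q * L p q))"
    unfolding kernel_form_def by (simp add: sum_distrib_left mult_ac)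
  also have "\<dots> = (\<Sum>p\<in>T. push_weights z I a p * (\<Sum>l\<in>I. b l * L p (z l)))"
    using sum_push_weights[OF assms] by simp
  also have "\<dots> = (\<Sum>k\<in>I. a k * (\<Sum>l\<in>I. b l * L (z k) (z l)))"
    by (rule sum_push_weights[OF assms])
  also have "\<dots> = kernel_form L I z a b"
    unfolding kernel_form_def by (simp add: sum_distrib_left mult_ac)
  finally show ?thesis .
qed

lemma kernel_form_nonneg:
  assumes "pd_kernel \<Omega> L" "finite I" "z ` I \<subseteq> \<Omega>"
  shows "0 \<le> kernel_form L I z a a"
proof -
  have "0 \<le> kernel_form L (z ` I) id (push_weights z I a) (push_weights z I a)"
    using assms unfolding pd_kernel_def kernel_form_def by auto
  then show ?thesis using kernel_form_push_weights[where T = "z ` I" and z = z] assms(2) by simp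
qed

lemma kernel_form_commute:
  assumes "pd_kernel \<Omega> L" "z ` I \<subseteq> \<Omega>"
  shows "kernel_form L I z b a = kernel_form L I z a b"
  unfolding kernel_form_def
  by (subst sum.swap) (use assms in \<open>auto simp: pd_kernel_def image_subset_iff mult_ac intro!: sum.cong\<close>)

lemma kernel_form_scale:
  "kernel_form L I z (\<lambda>k. r * a k) (\<lambda>k. s * b k) = r * s * kernel_form L I z a b"
  unfolding kernel_form_def by (simp add: sum_distrib_left mult_ac)

lemma kernel_form_add:
  assumes "pd_kernel \<Omega> L" "z ` I \<subseteq> \<Omega>"
  shows "kernel_form L I z (\<lambda>k. a k + b k) (\<lambda>k. a k + b k)
       = kernel_form L I z a a + 2 * kernel_form L I z a b + kernel_form L I z b b"
proof -
  have "kernel_form L I z (\<lambda>k. a k + b k) (\<lambda>k. a k + b k)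
      = kernel_form L I z a a + kernel_form L I z a b + kernel_form L I z b a + kernel_form L I z b b"
    unfolding kernel_form_def by (simp add: algebra_simps sum.distrib)
  then show ?thesis using kernel_form_commute[OF assms, where a = a and b = b] by simp
qed

lemma quadratic_nonneg_imp_discriminant_le:
  fixes A B C :: real
  assumes "\<And>t. 0 \<le> A + 2 * t * B + t\<^sup>2 * C" "0 \<le> C"
  shows "B\<^sup>2 \<le> A * C"
proof (cases "C = 0")
  case True
  have "B = 0"
  proof (rule ccontr)
    assume "B \<noteq> 0"
    have "0 \<le> A + 2 * (- (A + 1) / (2 * B)) * B" using assms(1)[of "- (A + 1) / (2 * B)"] True by simp
    also have "\<dots> = -1" using \<open>B \<noteq> 0\<close> by (simp add: field_simps)
    finally show False by simp
  qed
  then show ?thesis using True by simp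
next
  case False
  then have C: "C > 0" using assms(2) by simp
  have "0 \<le> A + 2 * (- B / C) * B + (- B / C)\<^sup>2 * C" using assms(1) .
  also have "\<dots> = A - B\<^sup>2 / C" using C by (simp add: field_simps power2_eq_square)
  finally show ?thesis using C by (simp add: field_simps)
qed

lemma kernel_form_Cauchy_Schwarz:
  assumes "pd_kernel \<Omega> L" "finite I" "z ` I \<subseteq> \<Omega>"
  shows "(kernel_form L I z a b)\<^sup>2 \<le> kernel_form L I z a a * kernel_form L I z b b"
proof (rule quadratic_nonneg_imp_discriminant_le)
  fix t
  show "0 \<le> kernel_form L I z a a + 2 * t * kernel_form L I z a b + t\<^sup>2 * kernel_form L I z b b"
    using kernel_form_nonneg[OF assms, of "\<lambda>k. a k + t * b k"]
      kernel_form_add[OF assms(1,3), of a "\<lambda>k. t * b k"]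
      kernel_form_scale[of L I z 1 a t b] kernel_form_scale[of L I z t b t b]
    by (simp add: power2_eq_square)
  show "0 \<le> kernel_form L I z b b" using kernel_form_nonneg[OF assms] .
qed

lemma zero_in_native_vals: "0 \<in> native_vals \<Omega> L f"
  unfolding native_vals_def by (auto intro!: exI[of _ "{}"])

lemma native_norm_nonneg: "in_native \<Omega> L f \<Longrightarrow> 0 \<le> native_norm \<Omega> L f"
  unfolding native_norm_def in_native_def by (rule cSup_upper2[OF zero_in_native_vals]) auto

lemma abs_sum_le_native_norm:
  assumes "in_native \<Omega> L f" "finite S" "S \<subseteq> \<Omega>" "kernel_form L S id c c \<le> 1"
  shows "\<bar>\<Sum>p\<in>S. c p * f p\<bar> \<le> native_norm \<Omega> L f"
  unfolding native_norm_def
  by (rule cSup_upper) (use assms in \<open>auto simp: native_vals_def in_native_def kernel_form_def\<close>)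

lemma abs_le_mult_sqrt_of_scaled_bound:
  fixes E N q :: real
  assumes "\<And>r. r\<^sup>2 * q \<le> 1 \<Longrightarrow> \<bar>r * E\<bar> \<le> N" "0 \<le> q" "0 \<le> N"
  shows "\<bar>E\<bar> \<le> N * sqrt q"
proof (cases "q = 0")
  case True
  have "E = 0"
  proof (rule ccontr)
    assume "E \<noteq> 0"
    have "N + 1 = \<bar>((N + 1) / \<bar>E\<bar>) * E\<bar>" using \<open>E \<noteq> 0\<close> \<open>0 \<le> N\<close> by (simp add: abs_mult)
    also have "\<dots> \<le> N" using assms(1)[of "(N + 1) / \<bar>E\<bar>"] True by simp
    finally show False by simp
  qed
  then show ?thesis using assms by simp
next
  case False
  then have "0 < q" using assms(2) by simp
  then have "\<bar>(1 / sqrt q) * E\<bar> \<le> N" using assms(1)[of "1 / sqrt q"] by (simp add: power_divide)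
  then show ?thesis using \<open>0 < q\<close> by (simp add: abs_mult field_simps)
qed

lemma abs_point_evaluations_le_native_norm:
  assumes "pd_kernel \<Omega> L" "finite I" "z ` I \<subseteq> \<Omega>" and f: "in_native \<Omega> L f"
  shows "\<bar>\<Sum>k\<in>I. w k * f (z k)\<bar> \<le> native_norm \<Omega> L f * sqrt (kernel_form L I z w w)"
proof (rule abs_le_mult_sqrt_of_scaled_bound)
  fix r :: real
  assume r: "r\<^sup>2 * kernel_form L I z w w \<le> 1"
  let ?c = "push_weights z I (\<lambda>k. r * w k)"
  have "kernel_form L (z ` I) id ?c ?c \<le> 1"
    using r kernel_form_push_weights[where T = "z ` I" and z = z] kernel_form_scale[of L I z r w r w]
      assms(2) by (simp add: power2_eq_square)
  then have "\<bar>\<Sum>p\<in>z ` I. ?c p * f p\<bar> \<le> native_norm \<Omega> L f"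
    using abs_sum_le_native_norm[OF f] assms(2,3) by simp
  then show "\<bar>r * (\<Sum>k\<in>I. w k * f (z k))\<bar> \<le> native_norm \<Omega> L f"
    using sum_push_weights[where T = "z ` I" and z = z and w = "\<lambda>k. r * w k" and h = f] assms(2)
    by (simp add: sum_distrib_left mult.assoc)
qed (use kernel_form_nonneg[OF assms(1-3)] native_norm_nonneg[OF f] in auto)

lemma kernel_representer_native:
  fixes w :: "'i \<Rightarrow> real"
  assumes "pd_kernel \<Omega> L" "finite I" "z ` I \<subseteq> \<Omega>"
  defines "g \<equiv> \<lambda>p. \<Sum>l\<in>I. w l * L p (z l)"
  shows "in_native \<Omega> L g" and "native_norm \<Omega> L g \<le> sqrt (kernel_form L I z w w)"
proof -
  have bound: "v \<le> sqrt (kernel_form L I z w w)" if vals: "v \<in> native_vals \<Omega> L g" for v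
  proof -
    obtain S c where v: "v = \<bar>\<Sum>p\<in>S. c p * g p\<bar>" and S: "finite S" "S \<subseteq> \<Omega>"
      and c: "kernel_form L S id c c \<le> 1"
      using vals unfolding native_vals_def kernel_form_def id_apply by blast
    define U where "U = S \<union> z ` I"
    define a where "a = push_weights id S c"
    define b where "b = push_weights z I w"
    have U: "finite U" "U \<subseteq> \<Omega>" "S \<subseteq> U" "z ` I \<subseteq> U"
      using S assms(2,3) by (auto simp: U_def)
    have "kernel_form L U id a b = (\<Sum>p\<in>U. a p * (\<Sum>q\<in>U. b q * L p q))"
      unfolding kernel_form_def by (simp add: sum_distrib_left mult_ac)
    also have "\<dots> = (\<Sum>p\<in>U. a p * g p)"
      unfolding b_def g_def using sum_push_weights[OF assms(2) U(1,4)] by simp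
    also have "\<dots> = (\<Sum>p\<in>S. c p * g p)"
      unfolding a_def using sum_push_weights[OF S(1) U(1)] U(3) by simp
    finally have ab: "kernel_form L U id a b = (\<Sum>p\<in>S. c p * g p)" .
    have aa: "kernel_form L U id a a = kernel_form L S id c c"
      unfolding a_def using kernel_form_push_weights[OF S(1) U(1)] U(3) by simp
    have bb: "kernel_form L U id b b = kernel_form L I z w w"
      unfolding b_def using kernel_form_push_weights[OF assms(2) U(1,4)] .
    have "v\<^sup>2 \<le> kernel_form L S id c c * kernel_form L I z w w"
      using kernel_form_Cauchy_Schwarz[OF assms(1) U(1), of id a b] U(2) ab aa bb v by simp
    also have "\<dots> \<le> kernel_form L I z w w"
      using c kernel_form_nonneg[OF assms(1) S(1), of id c] kernel_form_nonneg[OF assms(1-3), of w] S(2)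
      by (simp add: mult_left_le_one_le)
    finally show ?thesis by (rule real_le_rsqrt)
  qed
  then show "in_native \<Omega> L g" unfolding in_native_def bdd_above_def by blast
  show "native_norm \<Omega> L g \<le> sqrt (kernel_form L I z w w)"
    unfolding native_norm_def using bound by (intro cSup_least) (auto intro: zero_in_native_vals)
qed

definition native_dual_norm :: "'a set \<Rightarrow> ('a \<Rightarrow> 'a \<Rightarrow> real) \<Rightarrow> (('a \<Rightarrow> real) \<Rightarrow> real) \<Rightarrow> real" where
  "native_dual_norm \<Omega> L \<phi> = Sup (insert 0
     {\<bar>\<phi> f\<bar> / native_norm \<Omega> L f | f. in_native \<Omega> L f \<and> (\<exists>z\<in>\<Omega>. f z \<noteq> 0)})"

lemma native_dual_norm_point_evaluations:
  assumes pd: "pd_kernel \<Omega> L" and I: "finite I" "z ` I \<subseteq> \<Omega>"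
  shows "native_dual_norm \<Omega> L (\<lambda>f. \<Sum>k\<in>I. w k * f (z k)) = sqrt (kernel_form L I z w w)"
proof -
  define \<phi> where "\<phi> = (\<lambda>f. \<Sum>k\<in>I. w k * f (z k))"
  define q where "q = kernel_form L I z w w"
  define M where "M = {\<bar>\<phi> f\<bar> / native_norm \<Omega> L f | f. in_native \<Omega> L f \<and> (\<exists>z\<in>\<Omega>. f z \<noteq> 0)}"
  have q: "0 \<le> q" unfolding q_def using kernel_form_nonneg[OF pd I] .
  have upper: "v \<le> sqrt q" if "v \<in> insert 0 M" for v
  proof -
    have "\<bar>\<phi> f\<bar> / native_norm \<Omega> L f \<le> sqrt q" if f: "in_native \<Omega> L f" for f
      using abs_point_evaluations_le_native_norm[OF pd I f, of w] native_norm_nonneg[OF f] q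
      unfolding \<phi>_def q_def by (cases "native_norm \<Omega> L f = 0") (simp_all add: divide_le_eq mult.commute)
    then show ?thesis using that q unfolding M_def by auto
  qed
  have attained: "sqrt q \<in> insert 0 M"
  proof (cases "q = 0")
    case False
    define g where "g = (\<lambda>p. \<Sum>l\<in>I. w l * L p (z l))"
    have g: "in_native \<Omega> L g" "native_norm \<Omega> L g \<le> sqrt q"
      using kernel_representer_native[OF pd I] unfolding g_def q_def by auto
    have "\<phi> g = q" unfolding \<phi>_def g_def q_def kernel_form_def by (simp add: sum_distrib_left mult_ac)
    then have "sqrt q * sqrt q \<le> native_norm \<Omega> L g * sqrt q"
      using abs_point_evaluations_le_native_norm[OF pd I g(1), of w] q unfolding \<phi>_def q_def by simp
    then have "sqrt q \<le> native_norm \<Omega> L g"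
      by (rule mult_right_le_imp_le) (use q False in simp)
    then have norm_g: "native_norm \<Omega> L g = sqrt q" using g(2) by simp
    have "\<exists>p\<in>\<Omega>. g p \<noteq> 0"
    proof (rule ccontr)
      assume "\<not> (\<exists>p\<in>\<Omega>. g p \<noteq> 0)"
      then have "\<phi> g = 0" using I(2) unfolding \<phi>_def by (simp add: image_subset_iff)
      then show False using \<open>\<phi> g = q\<close> False by simp
    qed
    moreover have "sqrt q = \<bar>\<phi> g\<bar> / native_norm \<Omega> L g"
      using \<open>\<phi> g = q\<close> norm_g q False by (simp add: real_div_sqrt)
    ultimately show ?thesis using g(1) unfolding M_def by blast
  qed simp
  show ?thesis
    using cSup_eq_maximum[OF attained upper] unfolding native_dual_norm_def M_def \<phi>_def q_def .
qed

lemma kernel_form_reg_kernel: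
  assumes "finite I" "inj_on z I"
  shows "kernel_form (reg_kernel K lam) I z a a = kernel_form K I z a a + lam * (\<Sum>k\<in>I. (a k)\<^sup>2)"
proof -
  have diagonal: "(\<Sum>l\<in>I. a k * a l * delta_kernel (z k) (z l)) = (a k)\<^sup>2" if "k \<in> I" for k
  proof -
    have "(\<Sum>l\<in>I. a k * a l * delta_kernel (z k) (z l)) = (\<Sum>l\<in>I. if k = l then a k * a l else 0)"
      using assms that by (intro sum.cong) (auto simp: delta_kernel_def inj_on_eq_iff)
    also have "\<dots> = (a k)\<^sup>2" using assms(1) that by (simp add: power2_eq_square)
    finally show ?thesis .
  qed
  have "kernel_form (reg_kernel K lam) I z a a
      = kernel_form K I z a a + lam * (\<Sum>k\<in>I. \<Sum>l\<in>I. a k * a l * delta_kernel (z k) (z l))"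
    unfolding kernel_form_def reg_kernel_def by (simp add: algebra_simps sum.distrib sum_distrib_left)
  also have "(\<Sum>k\<in>I. \<Sum>l\<in>I. a k * a l * delta_kernel (z k) (z l)) = (\<Sum>k\<in>I. (a k)\<^sup>2)"
    using diagonal by (rule sum.cong[OF refl])
  finally show ?thesis .
qed

lemma strictly_pd_reg_kernel:
  assumes "pd_kernel \<Omega> K" "0 < lam"
  shows "strictly_pd_kernel \<Omega> (reg_kernel K lam)"
  unfolding strictly_pd_kernel_def
proof (intro conjI ballI allI impI)
  fix a b assume "a \<in> \<Omega>" "b \<in> \<Omega>"
  then show "reg_kernel K lam a b = reg_kernel K lam b a"
    using assms(1) unfolding pd_kernel_def reg_kernel_def delta_kernel_def by auto
next
  fix S and c :: "'a \<Rightarrow> real"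
  assume S: "finite S" "S \<subseteq> \<Omega>" and c: "\<exists>p\<in>S. c p \<noteq> 0"
  have "0 \<le> kernel_form K S id c c" using kernel_form_nonneg[OF assms(1) S(1)] S(2) by simp
  moreover have "0 < (\<Sum>p\<in>S. (c p)\<^sup>2)" using c S(1) by (auto intro: sum_pos2)
  ultimately have "0 < kernel_form (reg_kernel K lam) S id c c"
    using kernel_form_reg_kernel[of S id K lam c] S(1) assms(2) by (simp add: add_nonneg_pos)
  then show "0 < (\<Sum>p\<in>S. \<Sum>q\<in>S. c p * c q * reg_kernel K lam p q)" by (simp add: kernel_form_def)
qed

lemma pd_kernel_if_strictly_pd:
  assumes "strictly_pd_kernel \<Omega> L"
  shows "pd_kernel \<Omega> L"
  unfolding pd_kernel_def
proof (intro conjI allI impI)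
  fix S and c :: "'a \<Rightarrow> real"
  assume S: "finite S" "S \<subseteq> \<Omega>"
  show "0 \<le> (\<Sum>p\<in>S. \<Sum>q\<in>S. c p * c q * L p q)"
  proof (cases "\<exists>p\<in>S. c p \<noteq> 0")
    case True
    then show ?thesis using assms S unfolding strictly_pd_kernel_def by (blast intro: less_imp_le)
  qed simp
qed (use assms in \<open>simp add: strictly_pd_kernel_def\<close>)

lemma kernel_form_pos:
  assumes "strictly_pd_kernel \<Omega> L" "finite I" "z ` I \<subseteq> \<Omega>" "inj_on z I" "k \<in> I" "w k \<noteq> 0"
  shows "0 < kernel_form L I z w w"
proof -
  have "{j \<in> I. z j = z k} = {k}" using assms(4,5) by (auto simp: inj_on_eq_iff)
  then have "push_weights z I w (z k) = w k" unfolding push_weights_def by simp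
  then have "\<exists>p\<in>z ` I. push_weights z I w p \<noteq> 0" using assms(5,6) by force
  then have "0 < kernel_form L (z ` I) id (push_weights z I w) (push_weights z I w)"
    using assms(1) finite_imageI[OF assms(2)] assms(3)
    unfolding strictly_pd_kernel_def kernel_form_def id_apply by blast
  then show ?thesis using kernel_form_push_weights[where T = "z ` I" and z = z] assms(2) by simp
qed

lemma invertible_kmat:
  assumes "strictly_pd_kernel \<Omega> L" "range x \<subseteq> \<Omega>" "inj x"
  shows "invertible (kmat L x)"
  unfolding invertible_left_inverse matrix_left_invertible_ker
proof (intro allI impI)
  fix v assume kernel: "kmat L x *v v = 0"
  have "kernel_form L UNIV x (($) v) (($) v) = (\<Sum>k\<in>UNIV. v $ k * (kmat L x *v v) $ k)"
    unfolding kernel_form_def kmat_def matrix_vector_mult_def by (simp add: sum_distrib_left mult_ac)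
  then have "kernel_form L UNIV x (($) v) (($) v) = 0" using kernel by simp
  moreover have "0 < kernel_form L UNIV x (($) v) (($) v)" if "v $ k \<noteq> 0" for k
    using kernel_form_pos[of \<Omega> L UNIV x k "($) v"] assms that by simp
  ultimately show "v = 0" by (metis less_irrefl vec_eq_iff zero_index)
qed

lemma matrix_inv_left:
  fixes A :: "'a::semiring_1^'n^'m"
  assumes "invertible A"
  shows "matrix_inv A ** A = mat 1"
  using someI_ex[OF assms[unfolded invertible_def]] unfolding matrix_inv_def by blast

lemma kmat_reg_kernel:
  assumes "inj x"
  shows "kmat (reg_kernel K lam) x = kmat K x + lam *\<^sub>R mat 1"
  using assms by (simp add: kmat_def reg_kernel_def delta_kernel_def mat_def vec_eq_iff inj_eq)

lemma sum_matrix_vector_mult_transpose: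
  fixes M :: "'b::comm_semiring_1^'n^'n"
  shows "(\<Sum>j\<in>UNIV. (M *v v) $ j * G j) = (\<Sum>i\<in>UNIV. (\<Sum>j\<in>UNIV. M $ j $ i * G j) * v $ i)"
  unfolding matrix_vector_mult_def
  by (simp add: sum_distrib_left sum_distrib_right mult_ac) (rule sum.swap)

lemma s_approx_eq_lagrange:
  "s_approx K x mu f y = (\<Sum>i\<in>UNIV. lagrange K x mu i y * f (x i))"
  unfolding s_approx_def coeffs_def lagrange_def sum_matrix_vector_mult_transpose by simp

lemma I_interp_eq_lagrange:
  assumes "inj x"
  shows "I_interp K x lam f y = (\<Sum>i\<in>UNIV. lagrange (reg_kernel K lam) x 0 i y * f (x i))"
  unfolding I_interp_def coeffs_def lagrange_def sum_matrix_vector_mult_transpose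
  using kmat_reg_kernel[OF assms] by simp

lemma lagrange_reg_kernel:
  assumes "inj x" "y \<notin> range x"
  shows "lagrange (reg_kernel K lam) x 0 i y = lagrange K x lam i y"
  using assms by (auto simp: lagrange_def kmat_reg_kernel reg_kernel_def delta_kernel_def intro!: sum.cong)

lemma lagrange_interpolates:
  assumes "invertible (kmat L x)"
  shows "(\<Sum>i\<in>UNIV. lagrange L x 0 i y * L (x i) (x l)) = L y (x l)"
proof -
  define A where "A = kmat L x"
  have "(\<Sum>i\<in>UNIV. lagrange L x 0 i y * L (x i) (x l))
      = (\<Sum>j\<in>UNIV. L y (x j) * (\<Sum>i\<in>UNIV. matrix_inv A $ j $ i * A $ i $ l))"
    unfolding lagrange_def A_def kmat_def
    by (simp add: sum_distrib_left sum_distrib_right mult_ac) (rule sum.swap)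
  also have "\<dots> = (\<Sum>j\<in>UNIV. L y (x j) * (matrix_inv A ** A) $ j $ l)"
    by (simp add: matrix_matrix_mult_def)
  also have "\<dots> = L y (x l)"
    using matrix_inv_left[OF assms] unfolding A_def by (simp add: mat_def if_distrib cong: if_cong)
  finally show ?thesis .
qed

text \<open>The error functional \<open>f \<mapsto> f y - \<Sum>\<^sub>i u\<^sub>i f(x\<^sub>i)\<close> is a combination of point evaluations at the
  nodes \<open>case_option y x\<close>: the index \<open>None\<close> stands for the point \<open>y\<close>, \<open>Some i\<close> for \<open>x\<^sub>i\<close>.\<close>

definition error_weights :: "('n \<Rightarrow> real) \<Rightarrow> 'n option \<Rightarrow> real" where
  "error_weights u = case_option 1 (\<lambda>i. - u i)"

lemma sum_UNIV_option:
  "(\<Sum>k\<in>(UNIV :: 'n::finite option set). g k) = g None + (\<Sum>i\<in>UNIV. g (Some i))"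
proof -
  have "(\<Sum>k\<in>(UNIV :: 'n option set). g k) = (\<Sum>k\<in>insert None (range Some). g k)"
    by (simp add: UNIV_option_conv)
  also have "\<dots> = g None + (\<Sum>i\<in>UNIV. g (Some i))" by (simp add: sum.reindex)
  finally show ?thesis .
qed

lemma error_functional_eq_point_evaluations:
  fixes x :: "'n::finite \<Rightarrow> 'a"
  shows "f y - (\<Sum>i\<in>UNIV. u i * f (x i)) = (\<Sum>k\<in>UNIV. error_weights u k * f (case_option y x k))"
  by (simp add: sum_UNIV_option error_weights_def sum_negf)

lemma kernel_form_error_weights_le:
  fixes x :: "'n::finite \<Rightarrow> 'a"
  assumes pd: "pd_kernel \<Omega> L" and "y \<in> \<Omega>" "range x \<subseteq> \<Omega>"
    and interpolates: "\<And>l. (\<Sum>i\<in>UNIV. m i * L (x i) (x l)) = L y (x l)"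
  shows "kernel_form L UNIV (case_option y x) (error_weights m) (error_weights m)
       \<le> kernel_form L UNIV (case_option y x) (error_weights u) (error_weights u)"
proof -
  define z where "z = case_option y x"
  define d :: "'n option \<Rightarrow> real" where "d = case_option 0 (\<lambda>i. m i - u i)"
  have z: "z ` UNIV \<subseteq> \<Omega>" using assms(2,3) by (auto simp: z_def image_subset_iff split: option.split)
  have u: "error_weights u = (\<lambda>k. error_weights m k + d k)"
    by (auto simp: error_weights_def d_def split: option.split)
  have inner: "(\<Sum>k\<in>UNIV. error_weights m k * L (z k) (z (Some l))) = 0" for l
    using interpolates[of l] by (simp add: z_def sum_UNIV_option error_weights_def sum_negf)
  have "kernel_form L UNIV z (error_weights m) d
      = (\<Sum>l\<in>UNIV. d l * (\<Sum>k\<in>UNIV. error_weights m k * L (z k) (z l)))"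
    unfolding kernel_form_def by (subst sum.swap) (simp add: sum_distrib_left mult_ac)
  also have "\<dots> = 0" by (subst sum_UNIV_option) (simp add: d_def inner)
  finally have orthogonal: "kernel_form L UNIV z (error_weights m) d = 0" .
  have "0 \<le> kernel_form L UNIV z d d" using kernel_form_nonneg[OF pd _ z] by simp
  then show ?thesis
    unfolding z_def[symmetric] u using kernel_form_add[OF pd z, of "error_weights m" d] orthogonal by simp
qed

lemma kernel_form_error_weights_node:
  fixes x :: "'n::finite \<Rightarrow> 'a" and k :: 'n
  defines "w \<equiv> error_weights (\<lambda>i. of_bool (i = k))"
  shows "kernel_form L UNIV (case_option (x k) x) w w = 0"
proof -
  have inner: "(\<Sum>l\<in>UNIV. w l * L p (case_option (x k) x l)) = 0" for p
    by (simp add: w_def sum_UNIV_option error_weights_def sum_negf)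
  show ?thesis
    unfolding kernel_form_def by (simp add: sum_distrib_left[symmetric] mult.assoc inner)
qed

lemma kernel_form_reg_kernel_error_weights:
  fixes x :: "'n::finite \<Rightarrow> 'a"
  assumes "inj x" "y \<notin> range x"
  shows "kernel_form (reg_kernel K lam) UNIV (case_option y x) (error_weights u) (error_weights u)
       = kernel_form K UNIV (case_option y x) (error_weights u) (error_weights u)
         + lam * (1 + (\<Sum>i\<in>UNIV. (u i)\<^sup>2))"
proof -
  have "inj (case_option y x)" using assms by (auto simp: inj_def split: option.split)
  then show ?thesis
    using kernel_form_reg_kernel[of UNIV "case_option y x"]
    by (simp add: error_weights_def sum_UNIV_option)
qed

lemma lebesgue2_sq: "(lebesgue2 K x mu y)\<^sup>2 = (\<Sum>i\<in>UNIV. (lagrange K x mu i y)\<^sup>2)"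
  unfolding lebesgue2_def by (simp add: sum_nonneg)

lemma power_P_sq:
  fixes x :: "'n::finite \<Rightarrow> 'a" and mu :: real
  assumes "pd_kernel \<Omega> K" "range x \<subseteq> \<Omega>" "y \<in> \<Omega>"
  defines "w \<equiv> error_weights (\<lambda>i. lagrange K x mu i y)"
  shows "(power_P \<Omega> K x mu y)\<^sup>2 = kernel_form K UNIV (case_option y x) w w"
proof -
  have nodes: "range (case_option y x) \<subseteq> \<Omega>" using assms(2,3) by (auto simp: image_subset_iff split: option.split)
  have "(\<lambda>f. f y - s_approx K x mu f y) = (\<lambda>f. \<Sum>k\<in>UNIV. w k * f (case_option y x k))"
    unfolding s_approx_eq_lagrange w_def by (rule ext, rule error_functional_eq_point_evaluations)
  then have "power_P \<Omega> K x mu y = native_dual_norm \<Omega> K (\<lambda>f. \<Sum>k\<in>UNIV. w k * f (case_option y x k))"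
    unfolding power_P_def native_dual_norm_def by metis
  then show ?thesis
    using native_dual_norm_point_evaluations[OF assms(1) finite_class.finite_UNIV nodes]
      kernel_form_nonneg[OF assms(1) finite_class.finite_UNIV nodes] by simp
qed

lemma power_Q_sq:
  fixes x :: "'n::finite \<Rightarrow> 'a"
  assumes "pd_kernel \<Omega> K" "range x \<subseteq> \<Omega>" "inj x" "0 < lam" "y \<in> \<Omega>"
  defines "w \<equiv> error_weights (\<lambda>i. lagrange (reg_kernel K lam) x 0 i y)"
  shows "(power_Q \<Omega> K x lam y)\<^sup>2 = kernel_form (reg_kernel K lam) UNIV (case_option y x) w w"
proof -
  have pd: "pd_kernel \<Omega> (reg_kernel K lam)"
    using pd_kernel_if_strictly_pd[OF strictly_pd_reg_kernel[OF assms(1,4)]] .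
  have nodes: "range (case_option y x) \<subseteq> \<Omega>" using assms(2,5) by (auto simp: image_subset_iff split: option.split)
  have "(\<lambda>f. f y - I_interp K x lam f y) = (\<lambda>f. \<Sum>k\<in>UNIV. w k * f (case_option y x k))"
    unfolding I_interp_eq_lagrange[OF assms(3)] w_def
    by (rule ext, rule error_functional_eq_point_evaluations)
  then have "power_Q \<Omega> K x lam y
      = native_dual_norm \<Omega> (reg_kernel K lam) (\<lambda>f. \<Sum>k\<in>UNIV. w k * f (case_option y x k))"
    unfolding power_Q_def native_dual_norm_def by metis
  then show ?thesis
    using native_dual_norm_point_evaluations[OF pd finite_class.finite_UNIV nodes]
      kernel_form_nonneg[OF pd finite_class.finite_UNIV nodes] by simp
qed

lemma power_Q_sq_le_error_weights:
  fixes x :: "'n::finite \<Rightarrow> 'a"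
  assumes "pd_kernel \<Omega> K" "range x \<subseteq> \<Omega>" "inj x" "0 < lam" "y \<in> \<Omega>"
  shows "(power_Q \<Omega> K x lam y)\<^sup>2
       \<le> kernel_form (reg_kernel K lam) UNIV (case_option y x) (error_weights u) (error_weights u)"
proof -
  have strict: "strictly_pd_kernel \<Omega> (reg_kernel K lam)" using strictly_pd_reg_kernel[OF assms(1,4)] .
  show ?thesis
    unfolding power_Q_sq[OF assms]
    by (rule kernel_form_error_weights_le[OF pd_kernel_if_strictly_pd[OF strict] assms(5,2)])
      (rule lagrange_interpolates[OF invertible_kmat[OF strict assms(2,3)]])
qed

theorem proposition3p4:
  fixes \<Omega> :: "(real^'d) set"
    and K :: "real^'d \<Rightarrow> real^'d \<Rightarrow> real"
    and x :: "'n::finite \<Rightarrow> real^'d"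
    and lam mu :: real
    and y :: "real^'d"
  assumes pd: "pd_kernel \<Omega> K"
    and pts: "range x \<subseteq> \<Omega>"
    and distinct: "inj x"
    and lam_pos: "lam > 0"
    and mu_nonneg: "0 \<le> mu"
    and mu_le: "mu \<le> lam"
    and strict: "mu = 0 \<Longrightarrow> strictly_pd_kernel \<Omega> K"
    and y_in: "y \<in> \<Omega>"
  shows "(power_Q \<Omega> K x lam y)\<^sup>2
           \<le> (power_P \<Omega> K x mu y)\<^sup>2 + lam * (1 + (lebesgue2 K x mu y)\<^sup>2)
         \<and> (mu = lam \<and> y \<notin> range x \<longrightarrow>
         (power_Q \<Omega> K x lam y)\<^sup>2
           = (power_P \<Omega> K x mu y)\<^sup>2 + lam * (1 + (lebesgue2 K x mu y)\<^sup>2))"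
proof -
  define lag where "lag = (\<lambda>i. lagrange K x mu i y)"
  show ?thesis
  proof (cases "y \<in> range x")
    case True
    then obtain k where "y = x k" by blast
    then have "(power_Q \<Omega> K x lam y)\<^sup>2 \<le> 0"
      using power_Q_sq_le_error_weights[OF pd pts distinct lam_pos y_in, of "\<lambda>i. of_bool (i = k)"]
        kernel_form_error_weights_node[of "reg_kernel K lam" x k] by simp
    then show ?thesis using True lam_pos by (simp add: add_nonneg_nonneg)
  next
    case False
    have split: "kernel_form (reg_kernel K lam) UNIV (case_option y x) (error_weights lag) (error_weights lag)
        = (power_P \<Omega> K x mu y)\<^sup>2 + lam * (1 + (lebesgue2 K x mu y)\<^sup>2)"
      unfolding kernel_form_reg_kernel_error_weights[OF distinct False] power_P_sq[OF pd pts y_in]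
        lebesgue2_sq lag_def ..
    have "mu = lam \<Longrightarrow> (power_Q \<Omega> K x lam y)\<^sup>2
        = kernel_form (reg_kernel K lam) UNIV (case_option y x) (error_weights lag) (error_weights lag)"
      using power_Q_sq[OF pd pts distinct lam_pos y_in] lagrange_reg_kernel[OF distinct False]
      by (simp add: lag_def)
    then show ?thesis
      using power_Q_sq_le_error_weights[OF pd pts distinct lam_pos y_in, of lag] split by simp
  qed
qed

end
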